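(* Let $\ell\ge1$, $N=2^\ell$, $n_c,n_v\ge1$, and let ${\mathbf x}_{h,u}\in\mathbb{F}_2^\ell$ for $h\in\{0,\dots,n_c-1\}$, $u\in\{0,\dots,n_v-1\}$. Let $H$ be the $n_cN\times n_vN$ block matrix whose $(h,u)$ block is $P_{{\mathbf x}_{h,u}}$. For $0\le h<i\le n_c-1$ and ${\boldsymbol\alpha}\in\mathbb{F}_2^\ell$, let $\rho_{h,i}({\boldsymbol\alpha})=|\{u\in\{0,\dots,n_v-1\}: {\mathbf x}_{h,u}+{\mathbf x}_{i,u}={\boldsymbol\alpha}\}|$ (the multiplicity of ${\boldsymbol\alpha}$ in the multiset $A_{h,i}=\{{\mathbf x}_{h,u}+{\mathbf x}_{i,u}: u\}$). Then the number of $4$-cycles in the Tanner graph of $H$ is $$\mathcal{N}_4=2^\ell\sum_{0\le h<i\le n_c-1}\ \sum_{{\boldsymbol\alpha}\in\mathbb{F}_2^\ell}\binom{\rho_{h,i}({\boldsymbol\alpha})}{2}.$$ Consequently, the Tanner graph of $H$ has girth greater than $4$ if and only if, for every $h<i$, the elements ${\mathbf x}_{h,u}+{\mathbf x}_{i,u}$, $u=0,\dots,n_v-1$, are pairwise distinct.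
   Context: Rows and columns of $N\times N$ binary matrices are indexed by $\mathbb{F}_2^\ell$ via ${\mathbf x}=(x_1,\dots,x_\ell)\leftrightarrow 1+\sum_i x_i2^{i-1}$. For ${\mathbf a}\in\mathbb{F}_2^\ell$, $P_{\mathbf a}$ is the $N\times N$ binary matrix with $(P_{\mathbf a})_{{\mathbf x},{\mathbf y}}=1$ iff ${\mathbf y}={\mathbf x}+{\mathbf a}$ (dyadic permutation matrix). The Tanner graph of a binary matrix is the bipartite graph with check nodes = rows, variable nodes = columns, and edges at the $1$-entries. A $k$-cycle is a closed walk of $k$ edges with distinct vertices and edges; the girth is the length of a shortest cycle. *)

theory Defs
  imports Main "HOL-Library.Extended_Nat"
begin

text \<open>Vectors of F_2^l are represented as boolean lists of length l; addition is
componentwise exclusive or.\<close>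

definition F2vecs :: "nat \<Rightarrow> bool list set" where
  "F2vecs l = {xs. length xs = l}"

definition vadd :: "bool list \<Rightarrow> bool list \<Rightarrow> bool list" where
  "vadd xs ys = map2 (\<noteq>) xs ys"

definition dyadic_perm :: "bool list \<Rightarrow> bool list \<Rightarrow> bool list \<Rightarrow> bool" where
  "dyadic_perm a x y \<longleftrightarrow> y = vadd x a"

text \<open>Block matrix H: rows indexed by (h,x), columns by (u,y); block (h,u) is P_(X h u).\<close>
definition block_rows :: "nat \<Rightarrow> nat \<Rightarrow> (nat \<times> bool list) set" where
  "block_rows l n = {..<n} \<times> F2vecs l"

definition block_H :: "(nat \<Rightarrow> nat \<Rightarrow> bool list) \<Rightarrow> nat \<times> bool list \<Rightarrow> nat \<times> bool list \<Rightarrow> bool" where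
  "block_H X r c = dyadic_perm (X (fst r) (fst c)) (snd r) (snd c)"

text \<open>Tanner graph of a binary matrix M with row set R and column set C:
vertices Inl r (check nodes) and Inr c (variable nodes), edges at the 1-entries.\<close>
definition tanner_adj :: "'r set \<Rightarrow> 'c set \<Rightarrow> ('r \<Rightarrow> 'c \<Rightarrow> bool) \<Rightarrow> ('r + 'c) \<Rightarrow> ('r + 'c) \<Rightarrow> bool" where
  "tanner_adj R C M v w \<longleftrightarrow>
     (\<exists>r c. r \<in> R \<and> c \<in> C \<and> M r c \<and> {v, w} = {Inl r, Inr c})"

text \<open>The k-cycles of the Tanner graph, each identified with its edge set: closed walks
v_0 v_1 ... v_(k-1) v_0 of k edges with distinct vertices and distinct edges.\<close>
definition tanner_cycles :: "'r set \<Rightarrow> 'c set \<Rightarrow> ('r \<Rightarrow> 'c \<Rightarrow> bool) \<Rightarrow> nat \<Rightarrow> ('r + 'c) set set set" where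
  "tanner_cycles R C M k =
     {set (map (\<lambda>i. {vs ! i, vs ! ((i + 1) mod k)}) [0..<k]) | vs.
        0 < k \<and> length vs = k \<and> distinct vs \<and>
        distinct (map (\<lambda>i. {vs ! i, vs ! ((i + 1) mod k)}) [0..<k]) \<and>
        (\<forall>i<k. tanner_adj R C M (vs ! i) (vs ! ((i + 1) mod k)))}"

text \<open>Girth: length of a shortest cycle (infinity if there is none).\<close>
definition tanner_girth :: "'r set \<Rightarrow> 'c set \<Rightarrow> ('r \<Rightarrow> 'c \<Rightarrow> bool) \<Rightarrow> enat" where
  "tanner_girth R C M = Inf (enat ` {k. tanner_cycles R C M k \<noteq> {}})"

end

theory Submission
  imports Defs
begin

(* A 4-cycle of a Tanner graph is the edge set of a 2 x 2 all-ones submatrix, so the 4-cycles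
   are counted by choosing two rows and then two of their common neighbours.  In H the rows
   (h, x) and (i, y) have as common neighbours exactly the columns (u, x + x_{h,u}) with
   x_{h,u} + x_{i,u} = x + y: none if h = i, and rho_{h,i}(x + y) of them otherwise.  Summing
   over x and substituting alpha = x + y produces the factor 2^l.  The girth exceeds 4 iff this
   count vanishes, i.e. iff every rho_{h,i} is at most 1. *)

lemma length_vadd [simp]: "length (vadd x y) = min (length x) (length y)"
  by (simp add: vadd_def)

lemma nth_vadd [simp]: "k < length x \<Longrightarrow> k < length y \<Longrightarrow> vadd x y ! k = (x ! k \<noteq> y ! k)"
  by (simp add: vadd_def)

lemma vadd_vadd_cancel: "length x = length y \<Longrightarrow> vadd x (vadd x y) = y"
  by (auto simp: list_eq_iff_nth_eq)

lemma vadd_right_cancel: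
  "length x = length a \<Longrightarrow> length y = length a \<Longrightarrow> vadd x a = vadd y a \<longleftrightarrow> x = y"
  by (auto simp: list_eq_iff_nth_eq)

lemma vadd_eq_vadd_iff:
  assumes "length x = n" "length y = n" "length a = n" "length b = n"
  shows "vadd x a = vadd y b \<longleftrightarrow> vadd a b = vadd x y"
  using assms by (auto simp: list_eq_iff_nth_eq)

lemma vadd_in_F2vecs: "x \<in> F2vecs l \<Longrightarrow> y \<in> F2vecs l \<Longrightarrow> vadd x y \<in> F2vecs l"
  by (simp add: F2vecs_def)

lemma bij_betw_vadd_F2vecs: "x \<in> F2vecs l \<Longrightarrow> bij_betw (vadd x) (F2vecs l) (F2vecs l)"
  by (rule bij_betw_byWitness[where f' = "vadd x"]) (auto simp: F2vecs_def vadd_vadd_cancel)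

lemma finite_F2vecs: "finite (F2vecs l)"
  using finite_lists_length_eq[of "UNIV :: bool set" l] by (simp add: F2vecs_def)

lemma card_F2vecs: "card (F2vecs l) = 2 ^ l"
  using card_lists_length_eq[of "UNIV :: bool set" l] by (simp add: F2vecs_def)

lemma tanner_adj_iff:
  "tanner_adj R C M v w \<longleftrightarrow> (\<exists>r c. r \<in> R \<and> c \<in> C \<and> M r c \<and>
      (v = Inl r \<and> w = Inr c \<or> v = Inr c \<and> w = Inl r))"
  unfolding tanner_adj_def by (auto simp: doubleton_eq_iff)

lemma tanner_adj_isl: "tanner_adj R C M v w \<Longrightarrow> isl v \<noteq> isl w"
  by (auto simp: tanner_adj_iff)

lemma upt_4: "[0..<4] = [0, 1, 2, 3 :: nat]"
  by (simp add: upt_rec)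

lemma tanner_cycles_less_4: "k < 4 \<Longrightarrow> tanner_cycles R C M k = {}"
proof (rule ccontr)
  assume "k < 4" and "tanner_cycles R C M k \<noteq> {}"
  then obtain vs where "0 < k"
      and edges: "distinct (map (\<lambda>i. {vs ! i, vs ! ((i + 1) mod k)}) [0..<k])"
      and adj: "\<And>i. i < k \<Longrightarrow> tanner_adj R C M (vs ! i) (vs ! ((i + 1) mod k))"
    unfolding tanner_cycles_def by blast
  with \<open>k < 4\<close> consider "k = 1" | "k = 2" | "k = 3" by linarith
  then show False
  proof cases
    case 1
    then have "tanner_adj R C M (vs ! 0) (vs ! 0)" using adj[of 0] by simp
    then show False using tanner_adj_isl by blast
  next
    case 2
    then have "map (\<lambda>i. {vs ! i, vs ! ((i + 1) mod k)}) [0..<k] =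
        [{vs ! 0, vs ! 1}, {vs ! 1, vs ! 0}]"
      by (simp add: upt_rec)
    then show False using edges by (simp add: insert_commute)
  next
    case 3
    then have "tanner_adj R C M (vs ! 0) (vs ! 1)" "tanner_adj R C M (vs ! 1) (vs ! 2)"
      "tanner_adj R C M (vs ! 2) (vs ! 0)"
      using adj[of 0] adj[of 1] adj[of 2] by (simp_all add: numeral_2_eq_2)
    then show False using tanner_adj_isl by blast
  qed
qed

lemma tanner_girth_gt_4_iff: "tanner_girth R C M > 4 \<longleftrightarrow> tanner_cycles R C M 4 = {}"
proof
  assume "tanner_girth R C M > 4"
  moreover have "tanner_girth R C M \<le> 4" if "tanner_cycles R C M 4 \<noteq> {}"
    unfolding tanner_girth_def numeral_eq_enat using that by (auto intro: Inf_lower)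
  ultimately show "tanner_cycles R C M 4 = {}" by (meson leD)
next
  assume no4: "tanner_cycles R C M 4 = {}"
  have "enat 5 \<le> tanner_girth R C M"
    unfolding tanner_girth_def
  proof (rule Inf_greatest, clarsimp)
    fix k assume "tanner_cycles R C M k \<noteq> {}"
    with no4 tanner_cycles_less_4[of k R C M] show "5 \<le> k"
      by (cases "k = 4") auto
  qed
  then show "tanner_girth R C M > 4"
    unfolding numeral_eq_enat by (rule order.strict_trans2[rotated]) simp
qed

definition rectangle_edges :: "'r set \<Rightarrow> 'c set \<Rightarrow> ('r + 'c) set set" where
  "rectangle_edges Rs Cs = (\<lambda>(r, c). {Inl r, Inr c}) ` (Rs \<times> Cs)"

definition common_neighbours :: "'c set \<Rightarrow> ('r \<Rightarrow> 'c \<Rightarrow> bool) \<Rightarrow> 'r set \<Rightarrow> 'c set" where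
  "common_neighbours C M Rs = {c \<in> C. \<forall>r \<in> Rs. M r c}"

definition tanner_rectangles :: "'r set \<Rightarrow> 'c set \<Rightarrow> ('r \<Rightarrow> 'c \<Rightarrow> bool) \<Rightarrow> ('r set \<times> 'c set) set" where
  "tanner_rectangles R C M =
     (SIGMA Rs:{Rs. Rs \<subseteq> R \<and> card Rs = 2}. {Cs. Cs \<subseteq> common_neighbours C M Rs \<and> card Cs = 2})"

lemma rectangle_edges_doubletons:
  "rectangle_edges {r1, r2} {c1, c2} =
     {{Inl r1, Inr c1}, {Inr c1, Inl r2}, {Inl r2, Inr c2}, {Inr c2, Inl r1}}"
  unfolding rectangle_edges_def by auto

lemma mem_tanner_rectangles_iff:
  "(Rs, Cs) \<in> tanner_rectangles R C M \<longleftrightarrow>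
     (\<exists>r1 r2 c1 c2. Rs = {r1, r2} \<and> Cs = {c1, c2} \<and> r1 \<noteq> r2 \<and> c1 \<noteq> c2 \<and>
        r1 \<in> R \<and> r2 \<in> R \<and> c1 \<in> C \<and> c2 \<in> C \<and> M r1 c1 \<and> M r2 c1 \<and> M r2 c2 \<and> M r1 c2)"
  (is "_ \<longleftrightarrow> ?rectangle")
proof
  assume "(Rs, Cs) \<in> tanner_rectangles R C M"
  then have "Rs \<subseteq> R" "Cs \<subseteq> C" "card Rs = 2" "card Cs = 2" "\<forall>r\<in>Rs. \<forall>c\<in>Cs. M r c"
    by (auto simp: tanner_rectangles_def common_neighbours_def)
  moreover from \<open>card Rs = 2\<close> obtain r1 r2 where "Rs = {r1, r2}" "r1 \<noteq> r2"
    by (auto simp: card_2_iff)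
  moreover from \<open>card Cs = 2\<close> obtain c1 c2 where "Cs = {c1, c2}" "c1 \<noteq> c2"
    by (auto simp: card_2_iff)
  ultimately show ?rectangle by blast
next
  assume ?rectangle
  then show "(Rs, Cs) \<in> tanner_rectangles R C M"
    by (auto simp: tanner_rectangles_def common_neighbours_def)
qed

lemma tanner_closed_walk_4:
  assumes "tanner_adj R C M a b" "tanner_adj R C M b c" "tanner_adj R C M c d"
    "tanner_adj R C M d a" and "isl a"
  obtains r1 c1 r2 c2 where "a = Inl r1" "b = Inr c1" "c = Inl r2" "d = Inr c2"
    "r1 \<in> R" "r2 \<in> R" "c1 \<in> C" "c2 \<in> C" "M r1 c1" "M r2 c1" "M r2 c2" "M r1 c2"
proof -
  from \<open>isl a\<close> obtain r1 where a: "a = Inl r1" by (cases a) auto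
  with assms(1) obtain c1 where b: "b = Inr c1" "r1 \<in> R" "c1 \<in> C" "M r1 c1"
    by (auto simp: tanner_adj_iff)
  with assms(2) obtain r2 where c: "c = Inl r2" "r2 \<in> R" "M r2 c1"
    by (auto simp: tanner_adj_iff)
  with assms(3) obtain c2 where d: "d = Inr c2" "c2 \<in> C" "M r2 c2"
    by (auto simp: tanner_adj_iff)
  with assms(4) a have "M r1 c2" by (auto simp: tanner_adj_iff)
  with a b c d show thesis using that by blast
qed

lemma tanner_cycles_4_eq:
  "tanner_cycles R C M 4 = case_prod rectangle_edges ` tanner_rectangles R C M"
proof
  show "tanner_cycles R C M 4 \<subseteq> case_prod rectangle_edges ` tanner_rectangles R C M"
  proof
    fix E assume "E \<in> tanner_cycles R C M 4"
    then obtain vs where E: "E = set (map (\<lambda>i. {vs ! i, vs ! ((i + 1) mod 4)}) [0..<4])"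
      and "length vs = 4" and "distinct vs"
      and adj: "\<And>i. i < 4 \<Longrightarrow> tanner_adj R C M (vs ! i) (vs ! ((i + 1) mod 4))"
      unfolding tanner_cycles_def by blast
    from \<open>length vs = 4\<close> obtain a b c d where vs: "vs = [a, b, c, d]"
      by (auto simp: length_Suc_conv numeral_eq_Suc)
    have E_abcd: "E = {{a, b}, {b, c}, {c, d}, {d, a}}" using E vs by (simp add: upt_4)
    have ab: "tanner_adj R C M a b" and bc: "tanner_adj R C M b c"
      and cd: "tanner_adj R C M c d" and da: "tanner_adj R C M d a"
      using adj[of 0] adj[of 1] adj[of 2] adj[of 3] vs by simp_all
    have "\<exists>r1 r2 c1 c2. E = rectangle_edges {r1, r2} {c1, c2} \<and>
            ({r1, r2}, {c1, c2}) \<in> tanner_rectangles R C M"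
    proof (cases "isl a")
      case True
      with ab bc cd da obtain r1 c1 r2 c2
        where abcd: "a = Inl r1" "b = Inr c1" "c = Inl r2" "d = Inr c2"
        and "r1 \<in> R" "r2 \<in> R" "c1 \<in> C" "c2 \<in> C" "M r1 c1" "M r2 c1" "M r2 c2" "M r1 c2"
        by (rule tanner_closed_walk_4)
      moreover have "E = rectangle_edges {r1, r2} {c1, c2}"
        unfolding E_abcd abcd rectangle_edges_doubletons by blast
      moreover have "r1 \<noteq> r2" "c1 \<noteq> c2" using \<open>distinct vs\<close> unfolding vs abcd by auto
      ultimately show ?thesis unfolding mem_tanner_rectangles_iff by blast
    next
      case False
      with ab tanner_adj_isl have "isl b" by blast
      with bc cd da ab obtain r1 c1 r2 c2
        where abcd: "b = Inl r1" "c = Inr c1" "d = Inl r2" "a = Inr c2"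
        and "r1 \<in> R" "r2 \<in> R" "c1 \<in> C" "c2 \<in> C" "M r1 c1" "M r2 c1" "M r2 c2" "M r1 c2"
        by (rule tanner_closed_walk_4)
      moreover have "E = rectangle_edges {r1, r2} {c1, c2}"
        unfolding E_abcd abcd rectangle_edges_doubletons by blast
      moreover have "r1 \<noteq> r2" "c1 \<noteq> c2" using \<open>distinct vs\<close> unfolding vs abcd by auto
      ultimately show ?thesis unfolding mem_tanner_rectangles_iff by blast
    qed
    then show "E \<in> case_prod rectangle_edges ` tanner_rectangles R C M"
      by force
  qed
next
  show "case_prod rectangle_edges ` tanner_rectangles R C M \<subseteq> tanner_cycles R C M 4"
  proof clarify
    fix Rs Cs assume "(Rs, Cs) \<in> tanner_rectangles R C M"
    then obtain r1 r2 c1 c2 where Rs: "Rs = {r1, r2}" and Cs: "Cs = {c1, c2}"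
      and "r1 \<noteq> r2" "c1 \<noteq> c2" and
      facts: "r1 \<in> R" "r2 \<in> R" "c1 \<in> C" "c2 \<in> C" "M r1 c1" "M r2 c1" "M r2 c2" "M r1 c2"
      unfolding mem_tanner_rectangles_iff by blast
    define vs where "vs = [Inl r1, Inr c1, Inl r2, Inr c2]"
    have edges: "map (\<lambda>i. {vs ! i, vs ! ((i + 1) mod 4)}) [0..<4] =
        [{Inl r1, Inr c1}, {Inr c1, Inl r2}, {Inl r2, Inr c2}, {Inr c2, Inl r1}]"
      by (simp add: vs_def upt_4)
    have "rectangle_edges Rs Cs = set (map (\<lambda>i. {vs ! i, vs ! ((i + 1) mod 4)}) [0..<4])"
      unfolding Rs Cs edges rectangle_edges_doubletons by simp
    moreover have "distinct (map (\<lambda>i. {vs ! i, vs ! ((i + 1) mod 4)}) [0..<4])"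
      unfolding edges using \<open>r1 \<noteq> r2\<close> \<open>c1 \<noteq> c2\<close> by (simp add: doubleton_eq_iff)
    moreover have "distinct vs"
      using \<open>r1 \<noteq> r2\<close> \<open>c1 \<noteq> c2\<close> by (simp add: vs_def)
    moreover have "tanner_adj R C M (vs ! i) (vs ! ((i + 1) mod 4))" if "i < 4" for i
    proof -
      from that consider "i = 0" | "i = 1" | "i = 2" | "i = 3" by linarith
      then show ?thesis using facts by cases (auto simp: vs_def tanner_adj_iff)
    qed
    moreover have "length vs = 4" by (simp add: vs_def)
    ultimately show "rectangle_edges Rs Cs \<in> tanner_cycles R C M 4"
      unfolding tanner_cycles_def by (intro CollectI exI[of _ vs]) simp
  qed
qed

lemma rectangle_edges_Inl: "Cs \<noteq> {} \<Longrightarrow> {r. \<exists>e \<in> rectangle_edges Rs Cs. Inl r \<in> e} = Rs"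
  unfolding rectangle_edges_def by auto

lemma rectangle_edges_Inr: "Rs \<noteq> {} \<Longrightarrow> {c. \<exists>e \<in> rectangle_edges Rs Cs. Inr c \<in> e} = Cs"
  unfolding rectangle_edges_def by auto

lemma inj_on_rectangle_edges: "inj_on (case_prod rectangle_edges) (tanner_rectangles R C M)"
proof (rule inj_onI, clarify)
  fix Rs Cs Rs' Cs'
  assume "(Rs, Cs) \<in> tanner_rectangles R C M" "(Rs', Cs') \<in> tanner_rectangles R C M"
  then have "Rs \<noteq> {}" "Cs \<noteq> {}" "Rs' \<noteq> {}" "Cs' \<noteq> {}"
    unfolding tanner_rectangles_def by auto
  moreover assume "rectangle_edges Rs Cs = rectangle_edges Rs' Cs'"
  ultimately show "Rs = Rs' \<and> Cs = Cs'"
    by (metis rectangle_edges_Inl rectangle_edges_Inr)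
qed

lemma finite_tanner_rectangles: "finite R \<Longrightarrow> finite C \<Longrightarrow> finite (tanner_rectangles R C M)"
  unfolding tanner_rectangles_def common_neighbours_def by (intro finite_SigmaI) auto

lemma finite_tanner_cycles_4: "finite R \<Longrightarrow> finite C \<Longrightarrow> finite (tanner_cycles R C M 4)"
  by (simp add: tanner_cycles_4_eq finite_tanner_rectangles)

lemma card_tanner_cycles_4:
  assumes "finite R" "finite C"
  shows "card (tanner_cycles R C M 4) =
           (\<Sum>Rs \<in> {Rs. Rs \<subseteq> R \<and> card Rs = 2}. card (common_neighbours C M Rs) choose 2)"
proof -
  have finite_common: "finite (common_neighbours C M Rs)" for Rs
    using \<open>finite C\<close> by (simp add: common_neighbours_def)
  have "card (tanner_cycles R C M 4) = card (tanner_rectangles R C M)"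
    by (simp add: tanner_cycles_4_eq card_image inj_on_rectangle_edges)
  also have "\<dots> = (\<Sum>Rs \<in> {Rs. Rs \<subseteq> R \<and> card Rs = 2}.
                      card {Cs. Cs \<subseteq> common_neighbours C M Rs \<and> card Cs = 2})"
    unfolding tanner_rectangles_def using \<open>finite R\<close> finite_common
    by (intro card_SigmaI) auto
  also have "\<dots> = (\<Sum>Rs \<in> {Rs. Rs \<subseteq> R \<and> card Rs = 2}. card (common_neighbours C M Rs) choose 2)"
    using finite_common by (simp add: n_subsets)
  finally show ?thesis .
qed

lemma sum_2_subsets_blockwise:
  fixes g :: "(nat \<times> 'v) set \<Rightarrow> 'a::comm_monoid_add"
  assumes "finite V"
    and same_block: "\<And>h x y. h < n \<Longrightarrow> x \<in> V \<Longrightarrow> y \<in> V \<Longrightarrow> x \<noteq> y \<Longrightarrow> g {(h, x), (h, y)} = 0"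
  shows "(\<Sum>Rs \<in> {Rs. Rs \<subseteq> {..<n} \<times> V \<and> card Rs = 2}. g Rs) =
           (\<Sum>h<n. \<Sum>i\<in>{h<..<n}. \<Sum>x\<in>V. \<Sum>y\<in>V. g {(h, x), (i, y)})"
proof -
  define T where "T = (SIGMA h:{..<n}. SIGMA i:{h<..<n}. V \<times> V)"
  define pair :: "nat \<times> nat \<times> 'v \<times> 'v \<Rightarrow> (nat \<times> 'v) set"
    where "pair = (\<lambda>(h, i, x, y). {(h, x), (i, y)})"
  have "inj_on pair T"
    by (auto simp: inj_on_def T_def pair_def doubleton_eq_iff)
  have pair_T: "pair ` T \<subseteq> {Rs. Rs \<subseteq> {..<n} \<times> V \<and> card Rs = 2}"
    by (auto simp: T_def pair_def)
  have "g Rs = 0" if "Rs \<in> {Rs. Rs \<subseteq> {..<n} \<times> V \<and> card Rs = 2} - pair ` T" for Rs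
  proof -
    from that obtain h x i y where Rs: "Rs = {(h, x), (i, y)}" "(h, x) \<noteq> (i, y)"
      and "h < n" "i < n" "x \<in> V" "y \<in> V" and "Rs \<notin> pair ` T"
      by (auto simp: card_2_iff)
    moreover have "h \<noteq> i \<Longrightarrow> Rs \<in> pair ` T"
      using \<open>h < n\<close> \<open>i < n\<close> \<open>x \<in> V\<close> \<open>y \<in> V\<close>
      unfolding Rs T_def pair_def by (cases "h < i") (force simp: insert_commute)+
    ultimately show "g Rs = 0" using same_block by auto
  qed
  then have "(\<Sum>Rs \<in> {Rs. Rs \<subseteq> {..<n} \<times> V \<and> card Rs = 2}. g Rs) = (\<Sum>Rs \<in> pair ` T. g Rs)"
    using pair_T \<open>finite V\<close> by (intro sum.mono_neutral_right) auto
  also have "\<dots> = (\<Sum>t\<in>T. g (pair t))"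
    using \<open>inj_on pair T\<close> by (simp add: sum.reindex)
  also have "\<dots> = (\<Sum>h<n. \<Sum>i\<in>{h<..<n}. \<Sum>x\<in>V. \<Sum>y\<in>V. g {(h, x), (i, y)})"
    unfolding T_def pair_def using \<open>finite V\<close>
    by (simp add: sum.Sigma sum.cartesian_product prod.case_distrib)
  finally show ?thesis .
qed

lemma card_fibre_less_2_iff:
  "finite A \<Longrightarrow> card {u \<in> A. f u = \<alpha>} < 2 \<longleftrightarrow> (\<forall>u\<in>A. \<forall>v\<in>A. f u = \<alpha> \<longrightarrow> f v = \<alpha> \<longrightarrow> u = v)"
  using card_le_Suc0_iff_eq[of "{u \<in> A. f u = \<alpha>}"] by auto

lemma sum_card_fibres_choose_2_eq_0_iff:
  assumes "finite A" "finite S" "f ` A \<subseteq> S"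
  shows "(\<Sum>\<alpha>\<in>S. card {u \<in> A. f u = \<alpha>} choose 2) = 0 \<longleftrightarrow> inj_on f A"
proof -
  have "(\<Sum>\<alpha>\<in>S. card {u \<in> A. f u = \<alpha>} choose 2) = 0 \<longleftrightarrow> (\<forall>\<alpha>\<in>S. card {u \<in> A. f u = \<alpha>} < 2)"
    using \<open>finite S\<close> by simp
  also have "\<dots> \<longleftrightarrow> inj_on f A"
    using assms by (auto simp: card_fibre_less_2_iff inj_on_def)
  finally show ?thesis .
qed

lemma block_H_iff: "block_H X (h, x) (u, z) \<longleftrightarrow> z = vadd x (X h u)"
  by (simp add: block_H_def dyadic_perm_def)

lemma common_neighbours_block_H:
  assumes X: "\<And>h u. h < nc \<Longrightarrow> u < nv \<Longrightarrow> X h u \<in> F2vecs l"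
    and "h < nc" "i < nc" "x \<in> F2vecs l" "y \<in> F2vecs l"
  shows "common_neighbours (block_rows l nv) (block_H X) {(h, x), (i, y)} =
           (\<lambda>u. (u, vadd x (X h u))) ` {u \<in> {..<nv}. vadd (X h u) (X i u) = vadd x y}"
proof -
  have "vadd x (X h u) = vadd y (X i u) \<longleftrightarrow> vadd (X h u) (X i u) = vadd x y" if "u < nv" for u
    using X[OF \<open>h < nc\<close> that] X[OF \<open>i < nc\<close> that] \<open>x \<in> F2vecs l\<close> \<open>y \<in> F2vecs l\<close>
    by (intro vadd_eq_vadd_iff) (auto simp: F2vecs_def)
  moreover have "vadd x (X h u) \<in> F2vecs l" if "u < nv" for u
    using \<open>x \<in> F2vecs l\<close> X[OF \<open>h < nc\<close> that] by (rule vadd_in_F2vecs)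
  ultimately show ?thesis
    by (auto simp: common_neighbours_def block_rows_def block_H_iff)
qed

lemma card_common_neighbours_block_H:
  assumes "\<And>h u. h < nc \<Longrightarrow> u < nv \<Longrightarrow> X h u \<in> F2vecs l"
    and "h < nc" "i < nc" "x \<in> F2vecs l" "y \<in> F2vecs l"
  shows "card (common_neighbours (block_rows l nv) (block_H X) {(h, x), (i, y)}) =
           card {u \<in> {..<nv}. vadd (X h u) (X i u) = vadd x y}"
  using common_neighbours_block_H[OF assms] by (simp add: card_image inj_on_def)

lemma card_tanner_cycles_4_block_H:
  assumes X: "\<And>h u. h < nc \<Longrightarrow> u < nv \<Longrightarrow> X h u \<in> F2vecs l"
  shows "card (tanner_cycles (block_rows l nc) (block_rows l nv) (block_H X) 4)
           = 2 ^ l * (\<Sum>h<nc. \<Sum>i\<in>{h<..<nc}. \<Sum>\<alpha>\<in>F2vecs l.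
                 card {u\<in>{..<nv}. vadd (X h u) (X i u) = \<alpha>} choose 2)"
proof -
  define \<rho> where "\<rho> h i \<alpha> = card {u\<in>{..<nv}. vadd (X h u) (X i u) = \<alpha>}" for h i \<alpha>
  let ?common = "common_neighbours (block_rows l nv) (block_H X)"
  have common: "card (?common {(h, x), (i, y)}) = \<rho> h i (vadd x y)"
    if "h < nc" "i < nc" "x \<in> F2vecs l" "y \<in> F2vecs l" for h i x y
    unfolding \<rho>_def using X that by (rule card_common_neighbours_block_H)
  have same_block: "card (?common {(h, x), (h, y)}) choose 2 = 0"
    if "h < nc" "x \<in> F2vecs l" "y \<in> F2vecs l" "x \<noteq> y" for h x y
  proof -
    have "vadd (X h u) (X h u) \<noteq> vadd x y" if "u < nv" for u
      using X[OF \<open>h < nc\<close> that] \<open>x \<in> F2vecs l\<close> \<open>y \<in> F2vecs l\<close> \<open>x \<noteq> y\<close>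
      by (subst vadd_eq_vadd_iff[symmetric]) (auto simp: F2vecs_def vadd_right_cancel)
    then have "\<rho> h h (vadd x y) = 0" by (auto simp: \<rho>_def)
    then show ?thesis using common[of h h x y] that by simp
  qed
  have "card (tanner_cycles (block_rows l nc) (block_rows l nv) (block_H X) 4)
        = (\<Sum>Rs \<in> {Rs. Rs \<subseteq> block_rows l nc \<and> card Rs = 2}. card (?common Rs) choose 2)"
    by (rule card_tanner_cycles_4) (simp_all add: block_rows_def finite_F2vecs)
  also have "\<dots> = (\<Sum>h<nc. \<Sum>i\<in>{h<..<nc}. \<Sum>x\<in>F2vecs l. \<Sum>y\<in>F2vecs l.
                     card (?common {(h, x), (i, y)}) choose 2)"
    unfolding block_rows_def[of l nc] using finite_F2vecs same_block by (rule sum_2_subsets_blockwise)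
  also have "\<dots> = (\<Sum>h<nc. \<Sum>i\<in>{h<..<nc}. \<Sum>x\<in>F2vecs l. \<Sum>y\<in>F2vecs l. \<rho> h i (vadd x y) choose 2)"
    by (intro sum.cong refl) (simp add: common)
  also have "\<dots> = (\<Sum>h<nc. \<Sum>i\<in>{h<..<nc}. \<Sum>x\<in>F2vecs l. \<Sum>\<alpha>\<in>F2vecs l. \<rho> h i \<alpha> choose 2)"
    by (intro sum.cong refl sum.reindex_bij_betw bij_betw_vadd_F2vecs)
  also have "\<dots> = 2 ^ l * (\<Sum>h<nc. \<Sum>i\<in>{h<..<nc}. \<Sum>\<alpha>\<in>F2vecs l. \<rho> h i \<alpha> choose 2)"
    by (simp add: card_F2vecs sum_distrib_left)
  finally show ?thesis unfolding \<rho>_def .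
qed

lemma tanner_cycles_4_block_H_empty_iff:
  assumes X: "\<And>h u. h < nc \<Longrightarrow> u < nv \<Longrightarrow> X h u \<in> F2vecs l"
  shows "tanner_cycles (block_rows l nc) (block_rows l nv) (block_H X) 4 = {} \<longleftrightarrow>
           (\<forall>h i. h < i \<and> i < nc \<longrightarrow> inj_on (\<lambda>u. vadd (X h u) (X i u)) {..<nv})"
proof -
  let ?cycles = "tanner_cycles (block_rows l nc) (block_rows l nv) (block_H X) 4"
  let ?collisions = "\<lambda>h i. \<Sum>\<alpha>\<in>F2vecs l. card {u\<in>{..<nv}. vadd (X h u) (X i u) = \<alpha>} choose 2"
  have collisions_eq_0_iff: "?collisions h i = 0 \<longleftrightarrow> inj_on (\<lambda>u. vadd (X h u) (X i u)) {..<nv}"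
    if "h < nc" "i < nc" for h i
    using X that
    by (intro sum_card_fibres_choose_2_eq_0_iff) (auto simp: finite_F2vecs vadd_in_F2vecs)
  have "finite ?cycles"
    by (rule finite_tanner_cycles_4) (simp_all add: block_rows_def finite_F2vecs)
  then have "?cycles = {} \<longleftrightarrow> card ?cycles = 0"
    by simp
  also have "\<dots> \<longleftrightarrow> (\<forall>h<nc. \<forall>i\<in>{h<..<nc}. ?collisions h i = 0)"
    by (subst card_tanner_cycles_4_block_H[OF X]) (auto simp: finite_F2vecs)
  also have "\<dots> \<longleftrightarrow> (\<forall>h i. h < i \<and> i < nc \<longrightarrow> inj_on (\<lambda>u. vadd (X h u) (X i u)) {..<nv})"
    using collisions_eq_0_iff by (auto simp del: sum_eq_0_iff)
  finally show ?thesis .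
qed

theorem mainTheorem6:
  fixes l nc nv :: nat and X :: "nat \<Rightarrow> nat \<Rightarrow> bool list"
  assumes "l \<ge> 1" and "nc \<ge> 1" and "nv \<ge> 1"
    and "\<And>h u. h < nc \<Longrightarrow> u < nv \<Longrightarrow> X h u \<in> F2vecs l"
  shows "card (tanner_cycles (block_rows l nc) (block_rows l nv) (block_H X) 4)
           = 2 ^ l * (\<Sum>h<nc. \<Sum>i\<in>{h<..<nc}. \<Sum>\<alpha>\<in>F2vecs l.
                 card {u\<in>{..<nv}. vadd (X h u) (X i u) = \<alpha>} choose 2)
       \<and> (tanner_girth (block_rows l nc) (block_rows l nv) (block_H X) > 4
           \<longleftrightarrow> (\<forall>h i. h < i \<and> i < nc \<longrightarrow> inj_on (\<lambda>u. vadd (X h u) (X i u)) {..<nv}))"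
  using card_tanner_cycles_4_block_H[OF assms(4)] tanner_cycles_4_block_H_empty_iff[OF assms(4)]
  by (simp add: tanner_girth_gt_4_iff)

end
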